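(* Let $\mathfrak g$ be of type $A_n$, $b\in\mathcal B(\infty)$, and let $i\ne j$ in $I$. Let $m=m_i(b)$ (so $1\le m\le n+1-i$) and $m^\ast=m_j^\ast(b)$ (so $1\le m^\ast\le j$); below $\Sigma_t$ refers to index $i$ and $\Sigma^\ast_s$ to index $j$. If $i>j$, then $\Sigma^\ast_s(\widetilde f_i(b))=\Sigma^\ast_s(b)$ for $1\le s\le j$ and $\Sigma_t(\widetilde f_j^\ast(b))=\Sigma_t(b)$ for $1\le t\le n+1-i$. If $i<j$, then for $1\le s\le j$, $\Sigma^\ast_s(\widetilde f_i(b))=\Sigma^\ast_s(b)-1$ if $m=j-i$ and $s=m$; $=\Sigma^\ast_s(b)+1$ if $m=j-i+1$ and $s=m$; $=\Sigma^\ast_s(b)$ otherwise; and for $1\le t\le n+1-i$, $\Sigma_t(\widetilde f_j^\ast(b))=\Sigma_t(b)-1$ if $m^\ast=j-i$ and $t=m^\ast$; $=\Sigma_t(b)+1$ if $m^\ast=j-i+1$ and $t=m^\ast$; $=\Sigma_t(b)$ otherwise.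
   Context: $I=\{1,\dots,n\}$. $\mathcal I=\{(s,t)\in\mathbb Z_{>0}\times I:s+t\le n+1\}$; $\mathcal B(\infty)$ is the set of $b=(b_{s,t})_{(s,t)\in\mathcal I}\in\mathbb Z_{\ge0}^{\mathcal I}$ with $b_{1,k}\ge b_{2,k-1}\ge\dots\ge b_{k,1}$ for $1\le k\le n$. Convention: $b_{s,t}=0$, $\mathbf e_{s,t}=0$ for $(s,t)\notin\mathcal I$. $\partial_{s,t}(b)=b_{s,t}-b_{s,t+1}-b_{s+1,t-1}+b_{s+1,t}$, $\partial^\ast_{s,t}(b)=b_{s-1,t}-b_{s-1,t+1}-b_{s,t-1}+b_{s,t}$. For an index $i$ and $1\le k\le n+1-i$: $\Sigma_k(b)=\sum_{s=k}^{n+1-i}\partial_{s,i}(b)$, $m_i(b)$ the smallest $k$ maximizing $\Sigma_k(b)$, $\widetilde f_i(b)=b+\mathbf e_{m_i(b),i}$. For an index $j$ and $1\le k\le j$: $\Sigma^\ast_k(b)=\sum_{t=1}^k\partial^\ast_{t,j+1-t}(b)$, $m_j^\ast(b)$ the smallest $k$ maximizing $\Sigma^\ast_k(b)$, $\widetilde f_j^\ast(b)=b+\sum_{t=1}^{m_j^\ast(b)}(\mathbf e_{t,j+1-t}-\mathbf e_{t-1,j+1-t})$. *)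

theory Defs
  imports Main
begin

definition Iset :: "nat \<Rightarrow> (nat \<times> nat) set" where
  "Iset n = {(s,t). 1 \<le> s \<and> 1 \<le> t \<and> t \<le> n \<and> s + t \<le> n + 1}"

definition Binf :: "nat \<Rightarrow> (nat \<Rightarrow> nat \<Rightarrow> int) set" where
  "Binf n = {b. (\<forall>s t. (s,t) \<notin> Iset n \<longrightarrow> b s t = 0)
              \<and> (\<forall>s t. (s,t) \<in> Iset n \<longrightarrow> 0 \<le> b s t)
              \<and> (\<forall>s t. (s,t) \<in> Iset n \<and> 2 \<le> t \<longrightarrow> b (s+1) (t-1) \<le> b s t)}"

definition evec :: "nat \<Rightarrow> nat \<Rightarrow> nat \<Rightarrow> nat \<Rightarrow> nat \<Rightarrow> int" where
  "evec n u v = (\<lambda>s t. if (s,t) = (u,v) \<and> (u,v) \<in> Iset n then 1 else 0)"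

definition pd :: "(nat \<Rightarrow> nat \<Rightarrow> int) \<Rightarrow> nat \<Rightarrow> nat \<Rightarrow> int" where
  "pd b s t = b s t - b s (t+1) - b (s+1) (t-1) + b (s+1) t"

definition pds :: "(nat \<Rightarrow> nat \<Rightarrow> int) \<Rightarrow> nat \<Rightarrow> nat \<Rightarrow> int" where
  "pds b s t = b (s-1) t - b (s-1) (t+1) - b s (t-1) + b s t"

definition Sig :: "nat \<Rightarrow> nat \<Rightarrow> (nat \<Rightarrow> nat \<Rightarrow> int) \<Rightarrow> nat \<Rightarrow> int" where
  "Sig n i b k = (\<Sum>s = k..n+1-i. pd b s i)"

definition SigS :: "nat \<Rightarrow> (nat \<Rightarrow> nat \<Rightarrow> int) \<Rightarrow> nat \<Rightarrow> int" where
  "SigS j b k = (\<Sum>t = 1..k. pds b t (j+1-t))"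

definition mi :: "nat \<Rightarrow> nat \<Rightarrow> (nat \<Rightarrow> nat \<Rightarrow> int) \<Rightarrow> nat" where
  "mi n i b = (LEAST k. 1 \<le> k \<and> k \<le> n+1-i \<and>
                (\<forall>k'. 1 \<le> k' \<and> k' \<le> n+1-i \<longrightarrow> Sig n i b k' \<le> Sig n i b k))"

definition mjs :: "nat \<Rightarrow> (nat \<Rightarrow> nat \<Rightarrow> int) \<Rightarrow> nat" where
  "mjs j b = (LEAST k. 1 \<le> k \<and> k \<le> j \<and>
                (\<forall>k'. 1 \<le> k' \<and> k' \<le> j \<longrightarrow> SigS j b k' \<le> SigS j b k))"

definition fi :: "nat \<Rightarrow> nat \<Rightarrow> (nat \<Rightarrow> nat \<Rightarrow> int) \<Rightarrow> nat \<Rightarrow> nat \<Rightarrow> int" where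
  "fi n i b = (\<lambda>s t. b s t + evec n (mi n i b) i s t)"

definition fjs :: "nat \<Rightarrow> nat \<Rightarrow> (nat \<Rightarrow> nat \<Rightarrow> int) \<Rightarrow> nat \<Rightarrow> nat \<Rightarrow> int" where
  "fjs n j b = (\<lambda>s t. b s t +
     (\<Sum>u = 1..mjs j b. evec n u (j+1-u) s t - evec n (u-1) (j+1-u) s t))"

end

theory Submission imports Defs begin

text \<open>Both \<open>Sig\<close> and \<open>SigS\<close> are linear in \<open>b\<close>, so only the increments of \<open>fi\<close> (a unit vector
at \<open>(m, i)\<close>) and of \<open>fjs\<close> matter. \<open>SigS j b s\<close> telescopes along the antidiagonal to
\<open>(b s (j+1-s) - b s (j-s)) - (b 0 (j+1) - b 0 j)\<close>. The increment of \<open>fjs\<close> is the indicator of the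
antidiagonal segment \<open>{(u, j+1-u). 1 \<le> u \<le> m\<^sup>*}\<close> minus that of \<open>{(u, j-u). 1 \<le> u < m\<^sup>*}\<close>, and its
\<open>pd _ s i\<close> is again a telescoping difference in \<open>s\<close>. Both changes equal \<open>sig_shift\<close>, which
vanishes for \<open>i > j\<close>.\<close>

definition sig_shift :: "nat \<Rightarrow> nat \<Rightarrow> nat \<Rightarrow> nat \<Rightarrow> int" where
  "sig_shift j i m s = (if s = m then of_bool (m + i = j + 1) - of_bool (m + i = j) else 0)"

lemma Sig_add: "Sig n i (\<lambda>s t. b s t + e s t) k = Sig n i b k + Sig n i e k"
  unfolding Sig_def pd_def by (simp add: sum.distrib[symmetric] algebra_simps)

lemma SigS_add: "SigS j (\<lambda>s t. b s t + e s t) k = SigS j b k + SigS j e k"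
  unfolding SigS_def pds_def by (simp add: sum.distrib[symmetric] algebra_simps)

lemma SigS_telescope:
  assumes "k \<le> j"
  shows "SigS j b k = (b k (j + 1 - k) - b k (j - k)) - (b 0 (j + 1) - b 0 j)"
  using assms
proof (induction k)
  case 0
  then show ?case by (simp add: SigS_def)
next
  case (Suc k)
  have "SigS j b (Suc k) = SigS j b k + pds b (Suc k) (j + 1 - Suc k)"
    by (simp add: SigS_def)
  with Suc show ?case
    by (simp add: pds_def Suc_diff_le)
qed

lemma SigS_evec:
  assumes "(m, i) \<in> Iset n" "s \<le> j"
  shows "SigS j (evec n m i) s = sig_shift j i m s"
  using assms by (auto simp: SigS_telescope evec_def sig_shift_def Iset_def)

lemma Least_maximizer_in_range:
  fixes f :: "nat \<Rightarrow> 'a::linorder"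
  assumes "1 \<le> N"
  shows "(LEAST k. 1 \<le> k \<and> k \<le> N \<and> (\<forall>k'. 1 \<le> k' \<and> k' \<le> N \<longrightarrow> f k' \<le> f k)) \<in> {1..N}"
proof -
  have "Max (f ` {1..N}) \<in> f ` {1..N}"
    using assms by (intro Max_in) auto
  then obtain k where "k \<in> {1..N}" "f k = Max (f ` {1..N})"
    by auto
  then have "1 \<le> k \<and> k \<le> N \<and> (\<forall>k'. 1 \<le> k' \<and> k' \<le> N \<longrightarrow> f k' \<le> f k)"
    by auto
  then show ?thesis by (rule LeastI2_ex[OF exI]) auto
qed

lemma mi_in_range: "i \<le> n \<Longrightarrow> mi n i b \<in> {1..n + 1 - i}"
  unfolding mi_def by (rule Least_maximizer_in_range) auto

lemma mjs_in_range: "1 \<le> j \<Longrightarrow> mjs j b \<in> {1..j}"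
  unfolding mjs_def by (rule Least_maximizer_in_range)

lemma SigS_fi:
  assumes "1 \<le> i" "i \<le> n" "s \<le> j"
  shows "SigS j (fi n i b) s = SigS j b s + sig_shift j i (mi n i b) s"
proof -
  have "(mi n i b, i) \<in> Iset n"
    using mi_in_range[OF assms(2), of b] assms(1) unfolding Iset_def by auto
  then show ?thesis
    unfolding fi_def SigS_add using SigS_evec assms(3) by simp
qed

definition fjs_incr :: "nat \<Rightarrow> nat \<Rightarrow> nat \<Rightarrow> nat \<Rightarrow> int" where
  "fjs_incr j M p q =
     of_bool (1 \<le> p \<and> p \<le> M \<and> p + q = j + 1) - of_bool (1 \<le> p \<and> p < M \<and> p + q = j)"

lemma fjs_sum_eq_fjs_incr:
  assumes "M \<le> j" "j \<le> n"
  shows "(\<Sum>u = 1..M. evec n u (j+1-u) p q - evec n (u-1) (j+1-u) p q) = fjs_incr j M p q"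
  using assms
proof (induction M)
  case 0
  then show ?case by (simp add: fjs_incr_def)
next
  case (Suc M)
  then show ?case by (auto simp: fjs_incr_def evec_def Iset_def)
qed

lemma fjs_eq_plus_fjs_incr:
  assumes "1 \<le> j" "j \<le> n"
  shows "fjs n j b = (\<lambda>s t. b s t + fjs_incr j (mjs j b) s t)"
proof -
  have "mjs j b \<le> j"
    using mjs_in_range[OF assms(1)] by simp
  then show ?thesis
    unfolding fjs_def by (simp only: fjs_sum_eq_fjs_incr[OF _ assms(2)])
qed

lemma pd_fjs_incr:
  assumes "1 \<le> s" "1 \<le> i"
  shows "pd (fjs_incr j M) s i = sig_shift j i M s - sig_shift j i M (Suc s)"
  using assms unfolding pd_def fjs_incr_def sig_shift_def by (simp add: of_bool_def) presburger

lemma Sig_fjs_incr: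
  assumes "1 \<le> i" "i \<le> n" "j \<le> n" "1 \<le> t" "t \<le> n + 1 - i"
  shows "Sig n i (fjs_incr j M) t = sig_shift j i M t"
proof -
  let ?g = "sig_shift j i M" and ?N = "n + 1 - i"
  have "Sig n i (fjs_incr j M) t = - (\<Sum>s = t..?N. ?g (Suc s) - ?g s)"
    unfolding Sig_def using assms(1,4)
    by (simp add: pd_fjs_incr sum_negf[symmetric])
  also have "\<dots> = ?g t - ?g (Suc ?N)"
    using assms(5) by (simp add: sum_Suc_diff)
  also have "?g (Suc ?N) = 0"
    using assms(2,3) by (auto simp: sig_shift_def)
  finally show ?thesis by simp
qed

lemma Sig_fjs:
  assumes "1 \<le> i" "i \<le> n" "1 \<le> j" "j \<le> n" "1 \<le> t" "t \<le> n + 1 - i"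
  shows "Sig n i (fjs n j b) t = Sig n i b t + sig_shift j i (mjs j b) t"
  unfolding fjs_eq_plus_fjs_incr[OF assms(3,4)] Sig_add using Sig_fjs_incr assms by simp

theorem lemma6p10:
  fixes n i j :: nat and b :: "nat \<Rightarrow> nat \<Rightarrow> int"
  assumes "1 \<le> n" and "b \<in> Binf n" and "i \<in> {1..n}" and "j \<in> {1..n}" and "i \<noteq> j"
  shows "(j < i \<longrightarrow>
            (\<forall>s\<in>{1..j}. SigS j (fi n i b) s = SigS j b s) \<and>
            (\<forall>t\<in>{1..n+1-i}. Sig n i (fjs n j b) t = Sig n i b t))
       \<and> (i < j \<longrightarrow>
            (\<forall>s\<in>{1..j}. SigS j (fi n i b) s =
               (if mi n i b = j - i \<and> s = mi n i b then SigS j b s - 1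
                else if mi n i b = j - i + 1 \<and> s = mi n i b then SigS j b s + 1
                else SigS j b s)) \<and>
            (\<forall>t\<in>{1..n+1-i}. Sig n i (fjs n j b) t =
               (if mjs j b = j - i \<and> t = mjs j b then Sig n i b t - 1
                else if mjs j b = j - i + 1 \<and> t = mjs j b then Sig n i b t + 1
                else Sig n i b t)))"
proof -
  have i: "1 \<le> i" "i \<le> n" and j: "1 \<le> j" "j \<le> n"
    using assms(3,4) by auto
  have "SigS j (fi n i b) s = SigS j b s + sig_shift j i (mi n i b) s" if "s \<in> {1..j}" for s
    using SigS_fi[OF i] that by simp
  moreover have "Sig n i (fjs n j b) t = Sig n i b t + sig_shift j i (mjs j b) t"
    if "t \<in> {1..n + 1 - i}" for t
    using Sig_fjs[OF i j] that by simp
  ultimately show ?thesis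
    by (auto simp: sig_shift_def)
qed

end
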